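(* Let $K\ge L\ge T\ge 2$, let $x$ be a positive integer coprime to $q$, and let $\mathrm{CAT}_x(K,L,T)$ be as in the context. Then $|\mathcal{TR}\cap\mathcal{BR}|=2\bar T-\kappa$ and $|\mathcal{BL}\cap\mathcal{BR}|=2\bar T-\lambda$.
   Context: Let $\kappa,\lambda$ be the smallest non-negative integers such that $K+1+\kappa$ and $L+1+\lambda$ are coprime to $T-1$; $K^\star=K+1+\kappa$, $L^\star=L+1+\lambda$, $\bar T=T-1$, $q=K^\star L^\star+\bar T^2$. For $x$ coprime to $q$, $y\in\{0,\dots,q-1\}$ is the unique integer with $x\bar T+yK^\star\equiv0\pmod q$. $\mathrm{CAT}_x(K,L,T)$ consists of $q$ and the vectors over $\mathbb{Z}_q$: $\boldsymbol{\alpha}^{(p)}=(ky)_{k=0}^{K-1}$, $\boldsymbol{\alpha}^{(s)}=(Ky+kx)_{k=0}^{T-1}$, $\boldsymbol{\beta}^{(p)}=(kx)_{k=0}^{L-1}$, $\boldsymbol{\beta}^{(s)}=(ky-x)_{k=0}^{T-1}$, all mod $q$. With $\{\mathbf v\}$ the set of entries and sumsets $\mathcal A+\mathcal B=\{a+b\}$ in $\mathbb{Z}_q$: $\mathcal{TR}=\{\boldsymbol{\alpha}^{(p)}\}+\{\boldsymbol{\beta}^{(s)}\}$, $\mathcal{BL}=\{\boldsymbol{\alpha}^{(s)}\}+\{\boldsymbol{\beta}^{(p)}\}$, $\mathcal{BR}=\{\boldsymbol{\alpha}^{(s)}\}+\{\boldsymbol{\beta}^{(s)}\}$. *)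

theory Defs
  imports "HOL-Number_Theory.Number_Theory"
begin

definition kappa :: "nat \<Rightarrow> nat \<Rightarrow> nat" where
  "kappa K T = (LEAST k. coprime (K + 1 + k) (T - 1))"

definition Kstar :: "nat \<Rightarrow> nat \<Rightarrow> nat" where
  "Kstar K T = K + 1 + kappa K T"

definition Tbar :: "nat \<Rightarrow> nat" where
  "Tbar T = T - 1"

(* q = K* L* + Tbar^2 ; note L* = Kstar L T *)
definition qCAT :: "nat \<Rightarrow> nat \<Rightarrow> nat \<Rightarrow> nat" where
  "qCAT K L T = Kstar K T * Kstar L T + (Tbar T)^2"

definition yCAT :: "nat \<Rightarrow> nat \<Rightarrow> nat \<Rightarrow> nat \<Rightarrow> nat" where
  "yCAT x K L T = (THE y. y < qCAT K L T \<and>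
      [x * Tbar T + y * Kstar K T = 0] (mod qCAT K L T))"

(* entry sets of the four vectors, as residues in {0..q-1} (integers) *)
definition alpha_p :: "nat \<Rightarrow> nat \<Rightarrow> nat \<Rightarrow> nat \<Rightarrow> int set" where
  "alpha_p x K L T = (\<lambda>k. (int k * int (yCAT x K L T)) mod int (qCAT K L T)) ` {0..<K}"

definition alpha_s :: "nat \<Rightarrow> nat \<Rightarrow> nat \<Rightarrow> nat \<Rightarrow> int set" where
  "alpha_s x K L T = (\<lambda>k. (int K * int (yCAT x K L T) + int k * int x) mod int (qCAT K L T)) ` {0..<T}"

definition beta_p :: "nat \<Rightarrow> nat \<Rightarrow> nat \<Rightarrow> nat \<Rightarrow> int set" where
  "beta_p x K L T = (\<lambda>k. (int k * int x) mod int (qCAT K L T)) ` {0..<L}"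

definition beta_s :: "nat \<Rightarrow> nat \<Rightarrow> nat \<Rightarrow> nat \<Rightarrow> int set" where
  "beta_s x K L T = (\<lambda>k. (int k * int (yCAT x K L T) - int x) mod int (qCAT K L T)) ` {0..<T}"

definition sumset_mod :: "int \<Rightarrow> int set \<Rightarrow> int set \<Rightarrow> int set" where
  "sumset_mod q A B = {(a + b) mod q | a b. a \<in> A \<and> b \<in> B}"

definition TR :: "nat \<Rightarrow> nat \<Rightarrow> nat \<Rightarrow> nat \<Rightarrow> int set" where
  "TR x K L T = sumset_mod (int (qCAT K L T)) (alpha_p x K L T) (beta_s x K L T)"

definition BL :: "nat \<Rightarrow> nat \<Rightarrow> nat \<Rightarrow> nat \<Rightarrow> int set" where
  "BL x K L T = sumset_mod (int (qCAT K L T)) (alpha_s x K L T) (beta_p x K L T)"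

definition BR :: "nat \<Rightarrow> nat \<Rightarrow> nat \<Rightarrow> nat \<Rightarrow> int set" where
  "BR x K L T = sumset_mod (int (qCAT K L T)) (alpha_s x K L T) (beta_s x K L T)"

end

(*
  Every element of the three sumsets is the residue i x + m y (mod q) of a lattice point (i, m):
  TR is the row i = -1, 0 <= m <= K + T - 2; BL is the column m = K, 0 <= i <= T + L - 2; and BR
  is the square -1 <= i <= T - 2, K <= m <= K + T - 1.  The congruence defining y and the identity
  q = Kstar Lstar + Tbar^2 put (Tbar, Kstar) and (-Lstar, Tbar) into the kernel of
  (i, m) |-> i x + m y.  Multiplying a kernel vector (e, d) by Tbar gives q | d Tbar - e Kstar and
  q | e Tbar + d Lstar; for the short vectors joining a row (column) point to a square point these
  numbers are smaller than q, hence zero, which leaves only 0 and (Tbar, Kstar) (respectively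
  (-Lstar, Tbar)).  So a row point lies in BR iff it is a square point (Tbar of them) or becomes
  one after the shift by (Tbar, Kstar) (Tbar - kappa of them), and symmetrically for the column.
*)
theory Submission
  imports Defs
begin

lemma zdvd_abs_less_imp_eq_0:
  fixes q v :: int
  assumes "q dvd v" and "\<bar>v\<bar> < q"
  shows "v = 0"
proof (rule ccontr)
  assume "v \<noteq> 0"
  with assms(1) have "\<bar>q\<bar> \<le> \<bar>v\<bar>"
    by (rule dvd_imp_le_int[rotated])
  with assms(2) show False
    by linarith
qed

lemma coprime_mult_eq_cases:
  fixes a b d e :: int
  assumes "coprime a b" and "0 < a" and "a * d = b * e" and "0 \<le> e" and "e \<le> a"
  shows "(e = 0 \<and> d = 0) \<or> (e = a \<and> d = b)"
proof -
  have "a dvd b * e"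
    using assms(3) by (metis dvd_triv_left)
  with assms(1) have "a dvd e"
    by (simp add: coprime_dvd_mult_right_iff)
  then obtain c where c: "e = a * c" ..
  with assms(2,4,5) have "0 \<le> c" "c \<le> 1"
    by (simp_all add: zero_le_mult_iff mult_le_cancel_left1)
  then have "e = 0 \<or> e = a"
    using c by (cases "c = 0") simp_all
  then show ?thesis
    using assms(2,3) by (auto simp: mult.commute)
qed

lemma coprime_mult_add_power2:
  fixes a b c :: "'a::semiring_gcd"
  assumes "coprime a b"
  shows "coprime a (c * a + b\<^sup>2)"
proof -
  have "coprime a (b\<^sup>2)"
    using assms by simp
  then show ?thesis
    by (simp add: coprime_iff_gcd_eq_1 gcd_add_mult)
qed

lemma ex1_cong_add_mult_eq_0:
  fixes a c n :: nat
  assumes "coprime a n" and "n \<noteq> 0"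
  shows "\<exists>!y. y < n \<and> [c + y * a = 0] (mod n)"
proof -
  have "c + (n - c mod n) = n * (c div n) + n"
    using mult_div_mod_eq[of n c] mod_less_divisor[of n c] assms(2) by linarith
  then have inv: "[c + (n - c mod n) = 0] (mod n)"
    by (simp add: cong_def mod_add_left_eq[symmetric])
  have "[c + y * a = 0] (mod n) \<longleftrightarrow> [c + y * a = c + (n - c mod n)] (mod n)" for y
    using inv cong_sym cong_trans by blast
  also have "\<dots> y \<longleftrightarrow> [a * y = n - c mod n] (mod n)" for y
    by (simp only: cong_add_lcancel_nat mult.commute)
  finally show ?thesis
    using cong_solve_unique[OF assms, of "n - c mod n"] by simp
qed

lemma inj_on_affine_mod:
  fixes q c y a b :: int
  assumes "coprime y q" and "b - a < q"
  shows "inj_on (\<lambda>m. (c + m * y) mod q) {a..b}"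
proof (rule inj_onI)
  fix m m' assume "m \<in> {a..b}" "m' \<in> {a..b}" "(c + m * y) mod q = (c + m' * y) mod q"
  then have "q dvd (m - m') * y" and small: "\<bar>m - m'\<bar> < q"
    using assms(2) by (auto simp: mod_eq_dvd_iff algebra_simps)
  then have "q dvd m - m'"
    using assms(1) by (simp add: coprime_commute coprime_dvd_mult_left_iff)
  then have "m - m' = 0"
    using small by (rule zdvd_abs_less_imp_eq_0)
  then show "m = m'"
    by simp
qed

lemma card_image_Int_eq:
  assumes "inj_on f A"
  shows "card (f ` A \<inter> S) = card {a \<in> A. f a \<in> S}"
proof -
  have "f ` A \<inter> S = f ` {a \<in> A. f a \<in> S}" by blast
  then show ?thesis
    using assms by (simp add: card_image inj_on_subset)
qed

definition lattice_res :: "int \<Rightarrow> int \<Rightarrow> int \<Rightarrow> int \<Rightarrow> int \<Rightarrow> int" where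
  "lattice_res q x y i m = (i * x + m * y) mod q"

lemma lattice_res_eq_iff:
  "lattice_res q x y i m = lattice_res q x y i' m' \<longleftrightarrow> q dvd (i' - i) * x + (m' - m) * y"
proof -
  have "(i' - i) * x + (m' - m) * y = (i' * x + m' * y) - (i * x + m * y)"
    by (simp add: algebra_simps)
  then show ?thesis
    unfolding lattice_res_def by (simp add: mod_eq_dvd_iff dvd_diff_commute)
qed

lemma sumset_mod_image_mod:
  "sumset_mod q ((\<lambda>a. f a mod q) ` A) ((\<lambda>b. g b mod q) ` B) = (\<lambda>(a, b). (f a + g b) mod q) ` (A \<times> B)"
  unfolding sumset_mod_def by (auto simp: mod_add_eq) (metis imageI mod_add_eq)

lemma image_plus_atLeastLessThan_times:
  assumes "0 < A" and "0 < B"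
  shows "(\<lambda>(j, k). int j + int k) ` ({0..<A} \<times> {0..<B}) = {0..int A + int B - 2}"
proof (intro equalityI subsetI)
  fix m assume "m \<in> {0..int A + int B - 2}"
  then have "(nat (min m (int A - 1)), nat (m - min m (int A - 1))) \<in> {0..<A} \<times> {0..<B}"
    and "m = int (nat (min m (int A - 1))) + int (nat (m - min m (int A - 1)))"
    using assms by auto
  then show "m \<in> (\<lambda>(j, k). int j + int k) ` ({0..<A} \<times> {0..<B})"
    by (metis (mono_tags, lifting) case_prod_conv image_eqI)
qed auto

lemma image_int_plus_atLeastLessThan:
  "(\<lambda>k. int k + c) ` {0..<n} = {c..c + int n - 1}"
proof (intro equalityI subsetI)
  fix m assume "m \<in> {c..c + int n - 1}"
  then show "m \<in> (\<lambda>k. int k + c) ` {0..<n}"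
    by (intro image_eqI[of _ _ "nat (m - c)"]) auto
qed auto

lemma sumset_mod_row:
  assumes "0 < A" and "0 < B"
  shows "sumset_mod q ((\<lambda>k. (int k * Y) mod q) ` {0..<A}) ((\<lambda>k. (int k * Y - X) mod q) ` {0..<B})
    = lattice_res q X Y (-1) ` {0..int A + int B - 2}"
proof -
  have "sumset_mod q ((\<lambda>k. (int k * Y) mod q) ` {0..<A}) ((\<lambda>k. (int k * Y - X) mod q) ` {0..<B})
    = lattice_res q X Y (-1) ` (\<lambda>(j, k). int j + int k) ` ({0..<A} \<times> {0..<B})"
    unfolding sumset_mod_image_mod image_image by (simp add: lattice_res_def case_prod_unfold algebra_simps)
  then show ?thesis
    using assms by (simp add: image_plus_atLeastLessThan_times)
qed

lemma sumset_mod_col: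
  assumes "0 < A" and "0 < B"
  shows "sumset_mod q ((\<lambda>k. (int K * Y + int k * X) mod q) ` {0..<A}) ((\<lambda>k. (int k * X) mod q) ` {0..<B})
    = (\<lambda>n. lattice_res q X Y n (int K)) ` {0..int A + int B - 2}"
proof -
  have "sumset_mod q ((\<lambda>k. (int K * Y + int k * X) mod q) ` {0..<A}) ((\<lambda>k. (int k * X) mod q) ` {0..<B})
    = (\<lambda>n. lattice_res q X Y n (int K)) ` (\<lambda>(j, k). int j + int k) ` ({0..<A} \<times> {0..<B})"
    unfolding sumset_mod_image_mod image_image by (simp add: lattice_res_def case_prod_unfold algebra_simps)
  then show ?thesis
    using assms by (simp add: image_plus_atLeastLessThan_times)
qed

lemma sumset_mod_box:
  "sumset_mod q ((\<lambda>k. (int K * Y + int k * X) mod q) ` {0..<A}) ((\<lambda>k. (int k * Y - X) mod q) ` {0..<B})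
    = case_prod (lattice_res q X Y) ` ({-1..int A - 2} \<times> {int K..int K + int B - 1})"
proof -
  have "(\<lambda>k. int k - 1) ` {0..<A} = {-1..int A - 2}"
    using image_int_plus_atLeastLessThan[of "-1" A] by simp
  moreover have "(\<lambda>j. int j + int K) ` {0..<B} = {int K..int K + int B - 1}"
    using image_int_plus_atLeastLessThan[of "int K" B] by (simp add: ac_simps)
  ultimately have box: "{-1..int A - 2} \<times> {int K..int K + int B - 1}
    = map_prod (\<lambda>k. int k - 1) (\<lambda>j. int j + int K) ` ({0..<A} \<times> {0..<B})"
    by (rule map_prod_surj_on[symmetric])
  show ?thesis
    unfolding sumset_mod_image_mod box image_image
    by (simp add: lattice_res_def case_prod_unfold algebra_simps)
qed

(* Ks, Ls, Tb stand for Kstar, Lstar, Tbar; the upper bounds on Ks and Ls say kappa, lambda <= T - 2. *)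
locale cat_grid =
  fixes q x y K L Ks Ls Tb :: int
  assumes q_eq: "q = Ks * Ls + Tb\<^sup>2"
    and Tb_pos: "0 < Tb" and Tb_less_L: "Tb < L" and L_le_K: "L \<le> K"
    and Ks_bounds: "K < Ks" "Ks \<le> K + Tb"
    and Ls_bounds: "L < Ls" "Ls \<le> L + Tb"
    and coprime_Ks_Tb: "coprime Ks Tb" and coprime_Ls_Tb: "coprime Ls Tb"
    and coprime_x_q: "coprime x q"
    and dvd_x_Tb_y_Ks: "q dvd x * Tb + y * Ks"
begin

abbreviation res :: "int \<Rightarrow> int \<Rightarrow> int" where
  "res \<equiv> lattice_res q x y"

abbreviation box :: "int set" where
  "box \<equiv> case_prod res ` ({-1..Tb - 1} \<times> {K..K + Tb})"

lemma coprime_Tb_q: "coprime Tb q"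
proof -
  have "coprime Tb (Ks * Ls)"
    using coprime_Ks_Tb coprime_Ls_Tb by (simp add: coprime_commute)
  then have "coprime Tb (Tb * Tb + Ks * Ls)"
    by (simp add: coprime_iff_gcd_eq_1 gcd_add_mult)
  then show ?thesis
    by (simp add: q_eq power2_eq_square add.commute)
qed

lemma coprime_Ks_q: "coprime Ks q"
  using coprime_mult_add_power2[OF coprime_Ks_Tb, of Ls] by (simp add: q_eq mult.commute)

lemma coprime_y_q: "coprime y q"
proof (rule coprimeI)
  fix c assume "c dvd y" and "c dvd q"
  then have "c dvd x * Tb"
    using dvd_x_Tb_y_Ks by (metis dvd_add_left_iff dvd_mult2 dvd_trans)
  moreover have "coprime (x * Tb) q"
    using coprime_x_q coprime_Tb_q by simp
  ultimately show "is_unit c"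
    using \<open>c dvd q\<close> by (meson coprime_common_divisor)
qed

lemma dvd_Tb_y_Ls_x: "q dvd Tb * y - Ls * x"
proof -
  have "Ks * (Tb * y - Ls * x) = Tb * (x * Tb + y * Ks) - x * q"
    by (simp add: q_eq algebra_simps power2_eq_square)
  then have "q dvd Ks * (Tb * y - Ls * x)"
    using dvd_x_Tb_y_Ks by simp
  then show ?thesis
    using coprime_Ks_q by (simp add: coprime_commute coprime_dvd_mult_right_iff)
qed

lemma Ks_Ls_plus_Tb_le_q: "Ks + Tb \<le> q" "Ls + Tb \<le> q"
proof -
  have "Ks \<le> Ks * Ls" "Ls \<le> Ks * Ls" "Tb \<le> Tb\<^sup>2"
    using Ks_bounds Ls_bounds Tb_pos Tb_less_L L_le_K by (simp_all add: power2_eq_square)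
  then show "Ks + Tb \<le> q" "Ls + Tb \<le> q"
    by (simp_all add: q_eq)
qed

lemma kernel_dvd_Ks:
  assumes "q dvd e * x + d * y"
  shows "q dvd d * Tb - e * Ks"
proof -
  have "y * (d * Tb - e * Ks) = Tb * (e * x + d * y) - e * (x * Tb + y * Ks)"
    by (simp add: algebra_simps)
  then have "q dvd y * (d * Tb - e * Ks)"
    using assms dvd_x_Tb_y_Ks by simp
  then show ?thesis
    using coprime_y_q by (simp add: coprime_commute coprime_dvd_mult_right_iff)
qed

lemma kernel_dvd_Ls:
  assumes "q dvd e * x + d * y"
  shows "q dvd e * Tb + d * Ls"
proof -
  have "x * (e * Tb + d * Ls) = Tb * (e * x + d * y) - d * (Tb * y - Ls * x)"
    by (simp add: algebra_simps)
  then have "q dvd x * (e * Tb + d * Ls)"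
    using assms dvd_Tb_y_Ls_x by simp
  then show ?thesis
    using coprime_x_q by (simp add: coprime_commute coprime_dvd_mult_right_iff)
qed

lemma short_kernel_cases_Ks:
  assumes "q dvd e * x + d * y" and "0 \<le> e" "e \<le> Tb" and "1 - Tb \<le> d" "d \<le> K + Tb"
  shows "(e = 0 \<and> d = 0) \<or> (e = Tb \<and> d = Ks)"
proof -
  have "d * Tb \<le> (K + Tb) * Tb" "(1 - Tb) * Tb \<le> d * Tb"
    using assms(4,5) Tb_pos by simp_all
  moreover have "0 \<le> e * Ks" "e * Ks \<le> Tb * Ks"
    using assms(2,3) Ks_bounds Tb_less_L L_le_K by simp_all
  moreover have "K * Tb < Ks * Ls" "Tb * Ks < Ks * Ls"
    using Ks_bounds Ls_bounds Tb_pos Tb_less_L L_le_K by (simp_all add: mult_strict_mono)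
  ultimately have "\<bar>d * Tb - e * Ks\<bar> < q"
    using Tb_pos unfolding q_eq power2_eq_square abs_less_iff by (auto simp: algebra_simps)
  then have "Tb * d = Ks * e"
    using zdvd_abs_less_imp_eq_0[OF kernel_dvd_Ks[OF assms(1)]] by (simp add: mult.commute)
  then show ?thesis
    using coprime_mult_eq_cases coprime_Ks_Tb Tb_pos assms(2,3) by (metis coprime_commute)
qed

lemma short_kernel_cases_Ls:
  assumes "q dvd e * x + d * y" and "- (L + Tb) \<le> e" "e \<le> Tb - 1" and "0 \<le> d" "d \<le> Tb"
  shows "(d = 0 \<and> e = 0) \<or> (d = Tb \<and> e = - Ls)"
proof -
  have "- (L + Tb) * Tb \<le> e * Tb" "e * Tb \<le> (Tb - 1) * Tb"
    using assms(2,3) Tb_pos by simp_all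
  moreover have "0 \<le> d * Ls" "d * Ls \<le> Tb * Ls"
    using assms(4,5) Ls_bounds Tb_less_L by simp_all
  moreover have "L * Tb < Ks * Ls" "Tb * Ls < Ks * Ls"
    using Ks_bounds Ls_bounds Tb_pos Tb_less_L L_le_K by (simp_all add: mult_strict_mono)
  ultimately have "\<bar>e * Tb + d * Ls\<bar> < q"
    using Tb_pos unfolding q_eq power2_eq_square abs_less_iff by (auto simp: algebra_simps)
  then have "Tb * (- e) = Ls * d"
    using zdvd_abs_less_imp_eq_0[OF kernel_dvd_Ls[OF assms(1)]] by (simp add: algebra_simps)
  then show ?thesis
    using coprime_mult_eq_cases[of Tb Ls "- e" d] coprime_Ls_Tb Tb_pos assms(4,5)
    by (auto simp: coprime_commute)
qed

lemma row_res_in_box_iff: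
  assumes "0 \<le> m" "m \<le> K + Tb - 1"
  shows "res (-1) m \<in> box \<longleftrightarrow> m \<le> K + Tb - Ks \<or> K \<le> m"
proof
  assume "res (-1) m \<in> box"
  then obtain i m' where i: "-1 \<le> i" "i \<le> Tb - 1" and m': "K \<le> m'" "m' \<le> K + Tb"
    and "res (-1) m = res i m'"
    by auto
  then have "q dvd (i + 1) * x + (m' - m) * y"
    by (simp add: lattice_res_eq_iff)
  then have "(i + 1 = 0 \<and> m' - m = 0) \<or> (i + 1 = Tb \<and> m' - m = Ks)"
    by (rule short_kernel_cases_Ks) (use i m' assms in auto)
  then show "m \<le> K + Tb - Ks \<or> K \<le> m"
    using m' by auto
next
  assume "m \<le> K + Tb - Ks \<or> K \<le> m"
  then show "res (-1) m \<in> box"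
  proof
    assume "m \<le> K + Tb - Ks"
    have "res (-1) m = res (Tb - 1) (m + Ks)"
      using dvd_x_Tb_y_Ks by (simp add: lattice_res_eq_iff algebra_simps)
    moreover have "(Tb - 1, m + Ks) \<in> {-1..Tb - 1} \<times> {K..K + Tb}"
      using \<open>m \<le> K + Tb - Ks\<close> assms Ks_bounds Tb_pos by auto
    ultimately show ?thesis
      by force
  next
    assume "K \<le> m"
    then have "(-1, m) \<in> {-1..Tb - 1} \<times> {K..K + Tb}"
      using assms Tb_pos by auto
    then show ?thesis
      by force
  qed
qed

lemma col_res_in_box_iff:
  assumes "0 \<le> n" "n \<le> L + Tb - 1"
  shows "res n K \<in> box \<longleftrightarrow> n \<le> Tb - 1 \<or> Ls - 1 \<le> n"
proof
  assume "res n K \<in> box"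
  then obtain i m' where i: "-1 \<le> i" "i \<le> Tb - 1" and m': "K \<le> m'" "m' \<le> K + Tb"
    and "res n K = res i m'"
    by auto
  then have "q dvd (i - n) * x + (m' - K) * y"
    by (simp add: lattice_res_eq_iff)
  then have "(m' - K = 0 \<and> i - n = 0) \<or> (m' - K = Tb \<and> i - n = - Ls)"
    by (rule short_kernel_cases_Ls) (use i m' assms in auto)
  then show "n \<le> Tb - 1 \<or> Ls - 1 \<le> n"
    using i by auto
next
  assume "n \<le> Tb - 1 \<or> Ls - 1 \<le> n"
  then show "res n K \<in> box"
  proof
    assume "n \<le> Tb - 1"
    then have "(n, K) \<in> {-1..Tb - 1} \<times> {K..K + Tb}"
      using assms Tb_pos by auto
    then show ?thesis
      by force
  next
    assume "Ls - 1 \<le> n"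
    have "res n K = res (n - Ls) (K + Tb)"
      using dvd_Tb_y_Ls_x by (simp add: lattice_res_eq_iff algebra_simps)
    moreover have "(n - Ls, K + Tb) \<in> {-1..Tb - 1} \<times> {K..K + Tb}"
      using \<open>Ls - 1 \<le> n\<close> assms Ls_bounds Tb_pos by auto
    ultimately show ?thesis
      by force
  qed
qed

lemma card_row_Int_box:
  "int (card (res (-1) ` {0..K + Tb - 1} \<inter> box)) = 2 * Tb - (Ks - K - 1)"
proof -
  have "res (-1) = (\<lambda>m. (- x + m * y) mod q)"
    by (simp add: fun_eq_iff lattice_res_def)
  moreover have "inj_on (\<lambda>m. (- x + m * y) mod q) {0..K + Tb - 1}"
    by (rule inj_on_affine_mod[OF coprime_y_q]) (use Ks_Ls_plus_Tb_le_q(1) Ks_bounds in simp)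
  ultimately have "inj_on (res (-1)) {0..K + Tb - 1}"
    by (simp only:)
  then have "card (res (-1) ` {0..K + Tb - 1} \<inter> box) = card {m \<in> {0..K + Tb - 1}. res (-1) m \<in> box}"
    by (rule card_image_Int_eq)
  also have "{m \<in> {0..K + Tb - 1}. res (-1) m \<in> box}
    = {m \<in> {0..K + Tb - 1}. m \<le> K + Tb - Ks \<or> K \<le> m}"
    by (intro Collect_cong conj_cong refl) (simp add: row_res_in_box_iff)
  also have "\<dots> = {0..K + Tb - Ks} \<union> {K..K + Tb - 1}"
    using Ks_bounds Tb_pos Tb_less_L L_le_K by auto
  also have "card \<dots> = card {0..K + Tb - Ks} + card {K..K + Tb - 1}"
    using Ks_bounds Tb_less_L L_le_K by (intro card_Un_disjoint) auto
  finally show ?thesis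
    using Ks_bounds Tb_pos by simp
qed

lemma card_col_Int_box:
  "int (card ((\<lambda>n. res n K) ` {0..L + Tb - 1} \<inter> box)) = 2 * Tb - (Ls - L - 1)"
proof -
  have "(\<lambda>n. res n K) = (\<lambda>n. (K * y + n * x) mod q)"
    by (simp add: fun_eq_iff lattice_res_def add.commute)
  moreover have "inj_on (\<lambda>n. (K * y + n * x) mod q) {0..L + Tb - 1}"
    by (rule inj_on_affine_mod[OF coprime_x_q]) (use Ks_Ls_plus_Tb_le_q(2) Ls_bounds in simp)
  ultimately have "inj_on (\<lambda>n. res n K) {0..L + Tb - 1}"
    by (simp only:)
  then have "card ((\<lambda>n. res n K) ` {0..L + Tb - 1} \<inter> box) = card {n \<in> {0..L + Tb - 1}. res n K \<in> box}"
    by (rule card_image_Int_eq)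
  also have "{n \<in> {0..L + Tb - 1}. res n K \<in> box}
    = {n \<in> {0..L + Tb - 1}. n \<le> Tb - 1 \<or> Ls - 1 \<le> n}"
    by (intro Collect_cong conj_cong refl) (simp add: col_res_in_box_iff)
  also have "\<dots> = {0..Tb - 1} \<union> {Ls - 1..L + Tb - 1}"
    using Ls_bounds Tb_pos Tb_less_L by auto
  also have "card \<dots> = card {0..Tb - 1} + card {Ls - 1..L + Tb - 1}"
    using Ls_bounds Tb_less_L by (intro card_Un_disjoint) auto
  finally show ?thesis
    using Ls_bounds Tb_pos by simp
qed

end

lemma
  assumes "2 \<le> T"
  shows kappa_le: "kappa K T \<le> T - 2" and coprime_Kstar_Tbar: "coprime (Kstar K T) (Tbar T)"
proof -
  define r where "r = (K + T - 2) mod (T - 1)"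
  have "r < T - 1"
    using assms by (simp add: r_def)
  have eq: "K + 1 + (T - 2 - r) = (K + T - 2) div (T - 1) * (T - 1) + 1\<^sup>2"
    using div_mult_mod_eq[of "K + T - 2" "T - 1"] \<open>r < T - 1\<close> assms unfolding r_def power_one
    by linarith
  have "coprime (T - 1) ((K + T - 2) div (T - 1) * (T - 1) + 1\<^sup>2)"
    by (rule coprime_mult_add_power2) simp
  then have witness: "coprime (K + 1 + (T - 2 - r)) (T - 1)"
    unfolding eq by (rule coprime_commute[THEN iffD1])
  have "kappa K T \<le> T - 2 - r"
    unfolding kappa_def by (rule Least_le) (rule witness)
  then show "kappa K T \<le> T - 2"
    by simp
  show "coprime (Kstar K T) (Tbar T)"
    unfolding Kstar_def Tbar_def kappa_def by (rule LeastI) (rule witness)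
qed

lemma yCAT_cong:
  assumes "2 \<le> T"
  shows "[x * Tbar T + yCAT x K L T * Kstar K T = 0] (mod qCAT K L T)"
proof -
  have "coprime (Kstar K T) (qCAT K L T)"
    using coprime_mult_add_power2[OF coprime_Kstar_Tbar[OF assms, where K = K], where c = "Kstar L T"]
    by (simp add: qCAT_def mult.commute)
  moreover have "qCAT K L T \<noteq> 0"
    by (simp add: qCAT_def Kstar_def)
  ultimately have "\<exists>!y. y < qCAT K L T \<and> [x * Tbar T + y * Kstar K T = 0] (mod qCAT K L T)"
    by (rule ex1_cong_add_mult_eq_0)
  then show ?thesis
    unfolding yCAT_def by (rule theI'[THEN conjunct2])
qed

lemma cat_grid_CAT:
  assumes "L \<le> K" and "T \<le> L" and "2 \<le> T" and "coprime x (qCAT K L T)"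
  shows "cat_grid (int (qCAT K L T)) (int x) (int (yCAT x K L T)) (int K) (int L)
    (int (Kstar K T)) (int (Kstar L T)) (int (Tbar T))"
proof
  show "int (qCAT K L T) = int (Kstar K T) * int (Kstar L T) + (int (Tbar T))\<^sup>2"
    by (simp add: qCAT_def)
  show "0 < int (Tbar T)" "int (Tbar T) < int L" "int L \<le> int K"
    using assms(1-3) by (auto simp: Tbar_def)
  show "int K < int (Kstar K T)" "int L < int (Kstar L T)"
    by (simp_all add: Kstar_def)
  show "int (Kstar K T) \<le> int K + int (Tbar T)" "int (Kstar L T) \<le> int L + int (Tbar T)"
    using kappa_le[OF assms(3), where K = K] kappa_le[OF assms(3), where K = L] assms(3)
    by (auto simp: Kstar_def Tbar_def)
  show "coprime (int (Kstar K T)) (int (Tbar T))" "coprime (int (Kstar L T)) (int (Tbar T))"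
    using coprime_Kstar_Tbar[OF assms(3)] by simp_all
  show "coprime (int x) (int (qCAT K L T))"
    using assms(4) by simp
  have "qCAT K L T dvd x * Tbar T + yCAT x K L T * Kstar K T"
    using yCAT_cong[OF assms(3), where x = x and K = K and L = L] by (simp add: cong_0_iff)
  then have "int (qCAT K L T) dvd int (x * Tbar T + yCAT x K L T * Kstar K T)"
    by (simp only: int_dvd_int_iff)
  then show "int (qCAT K L T) dvd int x * int (Tbar T) + int (yCAT x K L T) * int (Kstar K T)"
    by simp
qed

theorem lemma7:
  fixes K L T x :: nat
  assumes "K \<ge> L" and "L \<ge> T" and "T \<ge> 2"
    and "x > 0" and "coprime x (qCAT K L T)"
  shows "int (card (TR x K L T \<inter> BR x K L T)) = 2 * int (Tbar T) - int (kappa K T)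
       \<and> int (card (BL x K L T \<inter> BR x K L T)) = 2 * int (Tbar T) - int (kappa L T)"
proof -
  interpret cat_grid "int (qCAT K L T)" "int x" "int (yCAT x K L T)" "int K" "int L"
    "int (Kstar K T)" "int (Kstar L T)" "int (Tbar T)"
    using assms(1-3,5) by (rule cat_grid_CAT)
  have T: "int T = int (Tbar T) + 1"
    using assms(3) by (simp add: Tbar_def)
  have "TR x K L T = res (-1) ` {0..int K + int (Tbar T) - 1}"
    unfolding TR_def alpha_p_def beta_s_def using assms by (subst sumset_mod_row) (auto simp: T)
  moreover have "BL x K L T = (\<lambda>n. res n (int K)) ` {0..int L + int (Tbar T) - 1}"
    unfolding BL_def alpha_s_def beta_p_def using assms by (subst sumset_mod_col) (auto simp: T)
  moreover have "BR x K L T = box"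
    unfolding BR_def alpha_s_def beta_s_def by (simp add: sumset_mod_box T)
  ultimately show ?thesis
    using card_row_Int_box card_col_Int_box by (simp add: Kstar_def)
qed

end
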